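(* Let $\boldsymbol\Phi':=\mathbf wx_N$ (apply $\mathbf w$, then multiply by $x_N$). Then $\boldsymbol\Phi'=s^{N-1}\Xi_1\boldsymbol\Phi$, and for every $v\in\mathbb N_0^N$ and $\mathbb T\in\mathrm{Tab}_\lambda$, $$P_{v,\mathbb T}\boldsymbol\Phi'=s^{N-1+\mathrm{CT}_{\mathbb T}[r_v[1]]}q^{v_1}P_{v,\mathbb T}\boldsymbol\Phi .$$
   Context: $N\ge2$, $q,s$ indeterminates, $K=\mathbb C(q,s)$. Operators act on the right, composed left to right. $\mathcal H_N(s)$ is generated by $T_1,\dots,T_{N-1}$ with $(T_i+1)(T_i-s)=0$ and braid relations. $\lambda$ a partition of $N$ (French convention, rows numbered bottom to top); $\mathrm{Tab}_\lambda$ = reverse standard tableaux (bijective fillings by $1,\dots,N$ strictly decreasing left to right in rows and bottom to top in columns); $\mathrm{CT}_{\mathbb T}[i]$ = column minus row of the cell of $i$; $\mathbb T^{(i,j)}$ exchanges $i,j$. $V_\lambda$ has basis $\mathrm{Tab}_\lambda$, right action $\mathbb TT_i=s\mathbb T$ if $i,i+1$ share a row, $-\mathbb T$ if they share a column, and if $i$ is in a higher row than $i+1$, with $m=\mathrm{CT}_{\mathbb T}[i+1]-\mathrm{CT}_{\mathbb T}[i]>0$, $\mathbb TT_i=\frac{s-1}{1-s^m}\mathbb T+\frac{s(1-s^{m+1})(1-s^{m-1})}{(1-s^m)^2}\mathbb T^{(i,i+1)}$; remaining case determined by this formula for $\mathbb T^{(i,i+1)}$ and the quadratic relation. $\mathcal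 M_\lambda=K[x_1,\dots,x_N]\otimes V_\lambda$; $(p\otimes u)\mathbf T_i=(1-s)\frac{x_{i+1}(p-p^{s_i})}{x_i-x_{i+1}}\otimes u+p^{s_i}\otimes uT_i$ ($p^{s_i}$: $x_i,x_{i+1}$ exchanged), $(p\otimes u)\mathbf w=p(qx_N,x_1,\dots,x_{N-1})\otimes uT_1\cdots T_{N-1}$, $\mathbf T_i^{-1}=s^{-1}(\mathbf T_i+1-s)$, $\Xi_i=s^{i-N}\mathbf T_{i-1}^{-1}\cdots\mathbf T_1^{-1}\mathbf w\mathbf T_{N-1}\cdots\mathbf T_i$, $\boldsymbol\Phi=\mathbf T_1^{-1}\cdots\mathbf T_{N-1}^{-1}x_N$. For $v\in\mathbb N_0^N$, $r_v[i]=\#\{j\le i:v_j\ge v_i\}+\#\{j>i:v_j>v_i\}$. $P_{v,\mathbb T}$ denotes the vector-valued nonsymmetric Macdonald polynomial: the simultaneous eigenfunction of the $\Xi_i$ in $\mathcal M_\lambda$ with $P_{v,\mathbb T}\Xi_i=q^{v_i}s^{\mathrm{CT}_{\mathbb T}[r_v[i]]}P_{v,\mathbb T}$ for all $i$. *)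

theory Defs
  imports "HOL-Library.Poly_Mapping" "HOL-Computational_Algebra.Polynomial"
          "HOL-Computational_Algebra.Fraction_Field" Complex_Main
begin

text \<open>K = fraction field of C[q][s]; the outer polynomial variable is s, the inner one is q.\<close>
type_synonym K = "complex poly poly fract"

definition qq :: K where "qq = Fract [:[:0, 1:]:] 1"
definition ss :: K where "ss = Fract [:0, 1:] 1"

type_synonym mpoly = "(nat \<Rightarrow>\<^sub>0 nat) \<Rightarrow>\<^sub>0 K"

definition mvar :: "nat \<Rightarrow> mpoly" where
  "mvar i = Poly_Mapping.single (Poly_Mapping.single i 1) 1"

definition mconst :: "K \<Rightarrow> mpoly" where
  "mconst c = Poly_Mapping.single 0 c"

definition poly_in_vars :: "nat \<Rightarrow> mpoly \<Rightarrow> bool" where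
  "poly_in_vars N p \<longleftrightarrow> (\<forall>m\<in>Poly_Mapping.keys p. Poly_Mapping.keys m \<subseteq> {1..N})"

definition mono_subst :: "((nat \<Rightarrow>\<^sub>0 nat) \<Rightarrow> (nat \<Rightarrow>\<^sub>0 nat)) \<Rightarrow> ((nat \<Rightarrow>\<^sub>0 nat) \<Rightarrow> K) \<Rightarrow> mpoly \<Rightarrow> mpoly" where
  "mono_subst f g p = (\<Sum>m\<in>Poly_Mapping.keys p. Poly_Mapping.single (f m) (Poly_Mapping.lookup p m * g m))"

definition swp :: "nat \<Rightarrow> nat \<Rightarrow> nat \<Rightarrow> nat" where
  "swp i j k = (if k = i then j else if k = j then i else k)"

definition swap_var :: "nat \<Rightarrow> mpoly \<Rightarrow> mpoly" where
  "swap_var i p = mono_subst (\<lambda>m. Abs_poly_mapping (\<lambda>k. Poly_Mapping.lookup m (swp i (Suc i) k))) (\<lambda>_. 1) p"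

text \<open>p(q x_N, x_1, ..., x_{N-1})\<close>
definition wshift :: "nat \<Rightarrow> mpoly \<Rightarrow> mpoly" where
  "wshift N p = mono_subst
     (\<lambda>m. Abs_poly_mapping (\<lambda>k. if 1 \<le> k \<and> k < N then Poly_Mapping.lookup m (Suc k)
                                else if k = N then Poly_Mapping.lookup m 1 else 0))
     (\<lambda>m. qq ^ Poly_Mapping.lookup m 1) p"

text \<open>x_{i+1} (p - p^{s_i}) / (x_i - x_{i+1}) (exact division)\<close>
definition ddiff :: "nat \<Rightarrow> mpoly \<Rightarrow> mpoly" where
  "ddiff i p = mvar (Suc i) * (THE r. (mvar i - mvar (Suc i)) * r = p - swap_var i p)"

definition is_partition :: "nat \<Rightarrow> nat list \<Rightarrow> bool" where
  "is_partition N lam \<longleftrightarrow> sorted_wrt (\<ge>) lam \<and> (\<forall>x\<in>set lam. 0 < x) \<and> sum_list lam = N"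

text \<open>cells (row, column), 0-indexed, row 0 = bottom row (of length lam!0)\<close>
definition cells :: "nat list \<Rightarrow> (nat \<times> nat) set" where
  "cells lam = {(r, c). r < length lam \<and> c < lam ! r}"

text \<open>a tableau records for each entry i in {1..N} its cell (row, column)\<close>
type_synonym tableau = "nat \<Rightarrow> nat \<times> nat"

definition tabs :: "nat \<Rightarrow> nat list \<Rightarrow> tableau set" where
  "tabs N lam = {t. bij_betw t {1..N} (cells lam)
      \<and> (\<forall>k. k \<notin> {1..N} \<longrightarrow> t k = (0, 0))
      \<and> (\<forall>i\<in>{1..N}. \<forall>j\<in>{1..N}. fst (t i) = fst (t j) \<and> snd (t i) < snd (t j) \<longrightarrow> j < i)
      \<and> (\<forall>i\<in>{1..N}. \<forall>j\<in>{1..N}. snd (t i) = snd (t j) \<and> fst (t i) < fst (t j) \<longrightarrow> j < i)}"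

definition CT :: "tableau \<Rightarrow> nat \<Rightarrow> int" where
  "CT t i = int (snd (t i)) - int (fst (t i))"

definition tswap :: "tableau \<Rightarrow> nat \<Rightarrow> nat \<Rightarrow> tableau" where
  "tswap t i j = t \<circ> swp i j"

type_synonym vec = "tableau \<Rightarrow> K"

definition delta :: "tableau \<Rightarrow> vec" where
  "delta t = (\<lambda>t'. if t' = t then 1 else 0)"

definition coef_a :: "int \<Rightarrow> K" where
  "coef_a m = (ss - 1) / (1 - ss powi m)"

definition coef_b :: "int \<Rightarrow> K" where
  "coef_b m = ss * (1 - ss powi (m + 1)) * (1 - ss powi (m - 1)) / (1 - ss powi m)^2"

text \<open>In the last case the coefficients are
  those forced by the formula for t' = t^{(i,i+1)} together with the quadratic relation:
  if t' T_i = a t' + b t then t T_i = ((s-1)a + s - a^2)/b t' + (s-1-a) t.\<close>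
definition hecke_img :: "tableau \<Rightarrow> nat \<Rightarrow> vec" where
  "hecke_img t i =
    (if fst (t i) = fst (t (Suc i)) then (\<lambda>t'. ss * delta t t')
     else if snd (t i) = snd (t (Suc i)) then (\<lambda>t'. - delta t t')
     else if fst (t i) > fst (t (Suc i)) then
       (let m = CT t (Suc i) - CT t i
        in (\<lambda>t'. coef_a m * delta t t' + coef_b m * delta (tswap t i (Suc i)) t'))
     else
       (let t2 = tswap t i (Suc i); m = CT t2 (Suc i) - CT t2 i;
            a = coef_a m; b = coef_b m
        in (\<lambda>t'. (ss - 1 - a) * delta t t' + (((ss - 1) * a + ss - a^2) / b) * delta t2 t')))"

definition vec_T :: "nat \<Rightarrow> nat list \<Rightarrow> nat \<Rightarrow> vec \<Rightarrow> vec" where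
  "vec_T N lam i u = (\<lambda>t'. \<Sum>t\<in>tabs N lam. u t * hecke_img t i t')"

text \<open>u T_1 T_2 ... T_{N-1} (right action, T_1 applied first)\<close>
definition vec_w :: "nat \<Rightarrow> nat list \<Rightarrow> vec \<Rightarrow> vec" where
  "vec_w N lam u = foldl (\<lambda>v i. vec_T N lam i v) u [1..<N]"

text \<open>an element is sum over tableaux t of f t (x) t\<close>
type_synonym melem = "tableau \<Rightarrow> mpoly"

definition Mcarrier :: "nat \<Rightarrow> nat list \<Rightarrow> melem set" where
  "Mcarrier N lam = {f. (\<forall>t. t \<notin> tabs N lam \<longrightarrow> f t = 0) \<and> (\<forall>t. poly_in_vars N (f t))}"

definition scal :: "K \<Rightarrow> melem \<Rightarrow> melem" where
  "scal c f = (\<lambda>t. mconst c * f t)"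

definition opT :: "nat \<Rightarrow> nat list \<Rightarrow> nat \<Rightarrow> melem \<Rightarrow> melem" where
  "opT N lam i f = (\<lambda>t'. mconst (1 - ss) * ddiff i (f t')
       + (\<Sum>t\<in>tabs N lam. mconst (hecke_img t i t') * swap_var i (f t)))"

definition opTinv :: "nat \<Rightarrow> nat list \<Rightarrow> nat \<Rightarrow> melem \<Rightarrow> melem" where
  "opTinv N lam i f = (\<lambda>t'. mconst (inverse ss) * (opT N lam i f t' + mconst (1 - ss) * f t'))"

definition opw :: "nat \<Rightarrow> nat list \<Rightarrow> melem \<Rightarrow> melem" where
  "opw N lam f = (\<lambda>t'. \<Sum>t\<in>tabs N lam. mconst (vec_w N lam (delta t) t') * wshift N (f t))"

definition opx :: "nat \<Rightarrow> melem \<Rightarrow> melem" where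
  "opx N f = (\<lambda>t'. mvar N * f t')"

text \<open>right action of a word of operators, composed left to right: f (A_1 A_2 ... A_n)\<close>
definition act :: "'m \<Rightarrow> ('m \<Rightarrow> 'm) list \<Rightarrow> 'm" where
  "act f ops = foldl (\<lambda>g A. A g) f ops"

definition Xi :: "nat \<Rightarrow> nat list \<Rightarrow> nat \<Rightarrow> melem \<Rightarrow> melem" where
  "Xi N lam i f = scal (ss powi (int i - int N))
     (act f (map (opTinv N lam) (rev [1..<i]) @ [opw N lam] @ map (opT N lam) (rev [i..<N])))"

definition Phi :: "nat \<Rightarrow> nat list \<Rightarrow> melem \<Rightarrow> melem" where
  "Phi N lam f = opx N (act f (map (opTinv N lam) [1..<N]))"

definition Phi' :: "nat \<Rightarrow> nat list \<Rightarrow> melem \<Rightarrow> melem" where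
  "Phi' N lam f = opx N (opw N lam f)"

definition rv :: "nat \<Rightarrow> (nat \<Rightarrow> nat) \<Rightarrow> nat \<Rightarrow> nat" where
  "rv N v i = card {j\<in>{1..i}. v j \<ge> v i} + card {j\<in>{Suc i..N}. v j > v i}"

end

theory Submission
  imports Defs
begin

text \<open>
  Composing left to right, \<open>\<Xi>\<^sub>1 \<Phi> = s\<^sup>1\<^sup>-\<^sup>N \<^bold>w \<T>\<^sub>N\<^sub>-\<^sub>1 \<cdots> \<T>\<^sub>1 \<T>\<^sub>1\<^sup>-\<^sup>1 \<cdots> \<T>\<^sub>N\<^sub>-\<^sub>1\<^sup>-\<^sup>1 x\<^sub>N\<close>, which
  telescopes to \<open>s\<^sup>1\<^sup>-\<^sup>N \<^bold>w x\<^sub>N = s\<^sup>1\<^sup>-\<^sup>N \<Phi>'\<close> as soon as \<open>s\<^sup>-\<^sup>1(\<T>\<^sub>i + 1 - s)\<close> is a left inverse of \<open>\<T>\<^sub>i\<close>.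
  That is the quadratic relation \<open>(\<T>\<^sub>i + 1)(\<T>\<^sub>i - s) = 0\<close> on \<open>\<M>\<^sub>\<lambda>\<close>, which follows from the
  quadratic relation on \<open>V\<^sub>\<lambda>\<close> together with identities for the divided difference in
  \<open>x\<^sub>i, x\<^sub>i\<^sub>+\<^sub>1\<close>. (In this encoding the relation only holds on elements vanishing outside the
  tableaux, which is the case for everything in the image of \<open>\<^bold>w\<close>.) The eigenvalue form
  follows by applying the identity to an eigenfunction of \<open>\<Xi>\<^sub>1\<close>.
\<close>

lemma mconst_add: "mconst (a + b) = mconst a + mconst b"
  unfolding mconst_def by (simp add: single_add)

lemma mconst_mult: "mconst (a * b) = mconst a * mconst b"
  unfolding mconst_def by (simp add: mult_single)

lemma mconst_uminus: "mconst (- a) = - mconst a"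
  unfolding mconst_def by (simp add: single_uminus)

lemma mconst_0 [simp]: "mconst 0 = 0"
  and mconst_1 [simp]: "mconst 1 = 1"
  unfolding mconst_def by simp_all

lemma mconst_sum: "mconst (sum f A) = (\<Sum>x\<in>A. mconst (f x))"
  by (induction A rule: infinite_finite_induct) (auto simp: mconst_add)

definition swap_exponents :: "nat \<Rightarrow> (nat \<Rightarrow>\<^sub>0 nat) \<Rightarrow> (nat \<Rightarrow>\<^sub>0 nat)" where
  "swap_exponents i m = Abs_poly_mapping (\<lambda>k. Poly_Mapping.lookup m (swp i (Suc i) k))"

lemma swp_swp [simp]: "swp i j (swp i j k) = k"
  by (simp add: swp_def)

lemma lookup_swap_exponents [simp]:
  "Poly_Mapping.lookup (swap_exponents i m) k = Poly_Mapping.lookup m (swp i (Suc i) k)"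
proof -
  have "{k. Poly_Mapping.lookup m (swp i (Suc i) k) \<noteq> 0}
      = swp i (Suc i) ` {k. Poly_Mapping.lookup m k \<noteq> 0}"
    by (auto simp: image_iff intro!: exI[of _ "swp i (Suc i) _"])
  then show ?thesis
    unfolding swap_exponents_def by (subst lookup_Abs_poly_mapping) simp_all
qed

lemma swap_exponents_swap_exponents [simp]: "swap_exponents i (swap_exponents i m) = m"
  by (rule poly_mapping_eqI) simp

lemma swap_exponents_eq_iff: "swap_exponents i a = b \<longleftrightarrow> a = swap_exponents i b"
  by (metis swap_exponents_swap_exponents)

lemma swap_exponents_zero [simp]: "swap_exponents i 0 = 0"
  by (rule poly_mapping_eqI) simp

lemma swap_exponents_add: "swap_exponents i (a + b) = swap_exponents i a + swap_exponents i b"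
  by (rule poly_mapping_eqI) (simp add: lookup_add)

lemma swap_exponents_single:
  "swap_exponents i (Poly_Mapping.single k n) = Poly_Mapping.single (swp i (Suc i) k) n"
  by (rule poly_mapping_eqI) (auto simp: lookup_single when_def swp_def)

lemma lookup_swap_var:
  "Poly_Mapping.lookup (swap_var i p) m = Poly_Mapping.lookup p (swap_exponents i m)"
proof -
  have "Poly_Mapping.lookup (swap_var i p) m =
      (\<Sum>m'\<in>Poly_Mapping.keys p. if m' = swap_exponents i m then Poly_Mapping.lookup p m' else 0)"
    unfolding swap_var_def mono_subst_def lookup_sum
    by (intro sum.cong)
       (auto simp: lookup_single when_def swap_exponents_def[symmetric] swap_exponents_eq_iff)
  also have "\<dots> = Poly_Mapping.lookup p (swap_exponents i m)"
    by (simp add: in_keys_iff)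
  finally show ?thesis .
qed

lemma swap_var_add: "swap_var i (p + q) = swap_var i p + swap_var i q"
  by (rule poly_mapping_eqI) (simp add: lookup_swap_var lookup_add)

lemma swap_var_diff: "swap_var i (p - q) = swap_var i p - swap_var i q"
  by (rule poly_mapping_eqI) (simp add: lookup_swap_var lookup_minus)

lemma swap_var_zero [simp]: "swap_var i 0 = 0"
  by (rule poly_mapping_eqI) (simp add: lookup_swap_var)

lemma swap_var_swap_var [simp]: "swap_var i (swap_var i p) = p"
  by (rule poly_mapping_eqI) (simp add: lookup_swap_var)

lemma swap_var_single:
  "swap_var i (Poly_Mapping.single a c) = Poly_Mapping.single (swap_exponents i a) c"
  by (rule poly_mapping_eqI)
     (auto simp: lookup_swap_var lookup_single when_def swap_exponents_eq_iff)

lemma poly_mapping_induct_single [case_names zero add_single]: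
  assumes "P 0" and "\<And>f a b. P f \<Longrightarrow> P (f + Poly_Mapping.single a b)"
  shows "P f"
proof (induction f rule: update_induct)
  case (update f a b)
  then have "Poly_Mapping.update a b f = f + Poly_Mapping.single a b"
    by (intro poly_mapping_eqI)
       (auto simp: lookup_update lookup_add lookup_single when_def in_keys_iff)
  with update assms(2) show ?case by simp
qed (rule assms(1))

lemma swap_var_mult: "swap_var i (p * q) = swap_var i p * swap_var i q"
proof -
  have single_mult: "swap_var i (Poly_Mapping.single a c * q)
      = Poly_Mapping.single (swap_exponents i a) c * swap_var i q" for a c
    by (induction q rule: poly_mapping_induct_single)
       (simp_all add: distrib_left swap_var_add mult_single swap_var_single swap_exponents_add)
  show ?thesis
    by (induction p rule: poly_mapping_induct_single)
       (simp_all add: distrib_right swap_var_add single_mult swap_var_single)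
qed

lemma swap_var_mconst [simp]: "swap_var i (mconst c) = mconst c"
  unfolding mconst_def by (simp add: swap_var_single)

lemma swap_var_mvar: "swap_var i (mvar k) = mvar (swp i (Suc i) k)"
  unfolding mvar_def by (simp add: swap_var_single swap_exponents_single)

lemma mvar_power: "mvar a ^ n = Poly_Mapping.single (Poly_Mapping.single a n) 1"
  by (induction n) (simp_all add: mvar_def mult_single single_add[symmetric] add.commute)

section \<open>Divided differences\<close>

definition mvar_diff :: "nat \<Rightarrow> mpoly" where
  "mvar_diff i = mvar i - mvar (Suc i)"

lemma mvar_diff_nonzero: "mvar_diff i \<noteq> 0"
proof
  assume "mvar_diff i = 0"
  then have "Poly_Mapping.lookup (mvar_diff i) (Poly_Mapping.single i 1) = 0" by simp
  moreover have "Poly_Mapping.single i (1::nat) \<noteq> Poly_Mapping.single (Suc i) 1"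
    by (metis lookup_single_eq lookup_single_not_eq n_not_Suc_n zero_neq_one)
  ultimately show False
    by (simp add: mvar_diff_def mvar_def lookup_minus lookup_single when_def)
qed

lemma swap_var_mvar_diff: "swap_var i (mvar_diff i) = - mvar_diff i"
  by (simp add: mvar_diff_def swap_var_diff swap_var_mvar swp_def)

definition swap_divisible :: "nat \<Rightarrow> mpoly \<Rightarrow> bool" where
  "swap_divisible i p \<longleftrightarrow> mvar_diff i dvd p - swap_var i p"

lemma swap_divisible_add:
  assumes "swap_divisible i p" "swap_divisible i q"
  shows "swap_divisible i (p + q)"
proof -
  have "p + q - swap_var i (p + q) = (p - swap_var i p) + (q - swap_var i q)"
    by (simp add: swap_var_add)
  with assms show ?thesis
    unfolding swap_divisible_def by (metis dvd_add)
qed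

lemma swap_divisible_mult:
  assumes "swap_divisible i p" "swap_divisible i q"
  shows "swap_divisible i (p * q)"
proof -
  have "p * q - swap_var i (p * q) = (p - swap_var i p) * q + swap_var i p * (q - swap_var i q)"
    by (simp add: swap_var_mult algebra_simps)
  with assms show ?thesis
    unfolding swap_divisible_def by (metis dvd_add dvd_mult dvd_mult2)
qed

lemma swap_divisible_mconst: "swap_divisible i (mconst c)"
  by (simp add: swap_divisible_def)

lemma swap_divisible_mvar: "swap_divisible i (mvar k)"
proof -
  consider "k = i" | "k = Suc i" | "k \<noteq> i" "k \<noteq> Suc i" by blast
  then have "mvar k - swap_var i (mvar k) \<in> {mvar_diff i, - mvar_diff i, 0}"
    by cases (simp_all add: swap_var_mvar swp_def mvar_diff_def)
  then show ?thesis
    unfolding swap_divisible_def by auto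
qed

lemma swap_divisible_monomial: "swap_divisible i (Poly_Mapping.single m c)"
proof (induction m arbitrary: c rule: poly_mapping_induct_single)
  case zero
  then show ?case using swap_divisible_mconst by (simp add: mconst_def)
next
  case (add_single f a b)
  have "Poly_Mapping.single (f + Poly_Mapping.single a b) c = Poly_Mapping.single f c * mvar a ^ b"
    by (simp add: mvar_power mult_single)
  moreover have "swap_divisible i (mvar a ^ b)"
    by (induction b) (simp_all add: swap_divisible_mult swap_divisible_mvar
        swap_divisible_mconst[of i 1, simplified])
  ultimately show ?case using add_single swap_divisible_mult by simp
qed

lemma swap_divisible: "swap_divisible i p"
  by (induction p rule: poly_mapping_induct_single)
     (auto intro: swap_divisible_add swap_divisible_monomial
       simp: swap_divisible_mconst[of i 0, simplified])

definition divdiff :: "nat \<Rightarrow> mpoly \<Rightarrow> mpoly" where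
  "divdiff i p = (THE r. (mvar i - mvar (Suc i)) * r = p - swap_var i p)"

lemma divdiff_eq: "mvar_diff i * divdiff i p = p - swap_var i p"
proof -
  have "\<exists>!r. mvar_diff i * r = p - swap_var i p"
    using swap_divisible[of i p] mvar_diff_nonzero[of i]
    unfolding swap_divisible_def by (auto elim!: dvdE)
  then show ?thesis
    unfolding divdiff_def mvar_diff_def[symmetric] by (rule theI')
qed

lemma divdiff_unique: "mvar_diff i * r = p - swap_var i p \<Longrightarrow> divdiff i p = r"
  using divdiff_eq[of i p] mvar_diff_nonzero[of i] by (metis mult_left_cancel)

lemma ddiff_divdiff: "ddiff i p = mvar (Suc i) * divdiff i p"
  unfolding ddiff_def divdiff_def ..

lemma divdiff_add: "divdiff i (p + q) = divdiff i p + divdiff i q"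
  by (rule divdiff_unique) (simp add: distrib_left divdiff_eq swap_var_add)

lemma divdiff_mconst_mult: "divdiff i (mconst c * p) = mconst c * divdiff i p"
  by (rule divdiff_unique)
     (simp add: mult.left_commute[of _ "mconst c"] divdiff_eq swap_var_mult algebra_simps)

lemma divdiff_swap_var: "divdiff i (swap_var i p) = - divdiff i p"
  by (rule divdiff_unique) (simp add: divdiff_eq algebra_simps)

lemma swap_var_divdiff: "swap_var i (divdiff i p) = divdiff i p"
proof -
  have "mvar_diff i * swap_var i (divdiff i p) = p - swap_var i p"
    using arg_cong[OF divdiff_eq[of i p], of "swap_var i"]
    by (simp add: swap_var_mult swap_var_mvar_diff swap_var_diff minus_equation_iff)
  then show ?thesis by (metis divdiff_unique)
qed

lemma ddiff_zero [simp]: "ddiff i 0 = 0"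
  using divdiff_unique[of i 0 0] by (simp add: ddiff_divdiff)

lemma ddiff_add: "ddiff i (p + q) = ddiff i p + ddiff i q"
  by (simp add: ddiff_divdiff divdiff_add distrib_left)

lemma ddiff_mconst_mult: "ddiff i (mconst c * p) = mconst c * ddiff i p"
  by (simp add: ddiff_divdiff divdiff_mconst_mult mult.left_commute)

lemma ddiff_ddiff: "ddiff i (ddiff i p) = - ddiff i p"
proof -
  have "divdiff i (mvar (Suc i) * divdiff i p) = - divdiff i p"
    by (rule divdiff_unique)
       (simp add: swap_var_mult swap_var_divdiff swap_var_mvar swp_def mvar_diff_def algebra_simps)
  then show ?thesis by (simp add: ddiff_divdiff)
qed

lemma ddiff_swap_var_add_swap_var_ddiff:
  "ddiff i (swap_var i p) + swap_var i (ddiff i p) = p - swap_var i p"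
  by (simp add: ddiff_divdiff divdiff_swap_var swap_var_mult swap_var_divdiff swap_var_mvar
      swp_def divdiff_eq[symmetric] mvar_diff_def algebra_simps)

lemma ss_power: "ss ^ n = Fract ([:0, 1:] ^ n) 1"
  by (induction n) (simp_all add: ss_def One_fract_def)

lemma ss_nonzero [simp]: "ss \<noteq> 0"
  by (simp add: ss_def Zero_fract_def eq_fract)

lemma ss_power_neq_one: "n \<noteq> 0 \<Longrightarrow> ss ^ n \<noteq> 1"
proof
  assume "n \<noteq> 0" "ss ^ n = 1"
  then have "([:0, 1:] :: complex poly poly) ^ n = 1"
    by (simp add: ss_power One_fract_def eq_fract)
  then have "degree (([:0, 1:] :: complex poly poly) ^ n) = 0" by simp
  with \<open>n \<noteq> 0\<close> show False by (simp add: degree_power_eq)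
qed

lemma ss_power_int_neq_one:
  assumes "k \<noteq> 0"
  shows "ss powi k \<noteq> 1"
proof (cases "k \<ge> 0")
  case True
  then show ?thesis
    using assms ss_power_neq_one[of "nat k"] by (simp add: power_int_def)
next
  case False
  then have "ss powi k = inverse (ss ^ nat (- k))"
    using power_int_minus[of ss "- k"] by (simp add: power_int_def)
  then show ?thesis
    using ss_power_neq_one[of "nat (- k)"] False by (auto simp: inverse_eq_iff_eq)
qed

lemma coef_b_nonzero: "2 \<le> m \<Longrightarrow> coef_b m \<noteq> 0"
  using ss_power_int_neq_one[of "m + 1"] ss_power_int_neq_one[of "m - 1"]
    ss_power_int_neq_one[of m]
  by (simp add: coef_b_def)

section \<open>Reverse standard tableaux\<close>

lemma tabsD:
  assumes "t \<in> tabs N lam"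
  shows tabs_bij: "bij_betw t {1..N} (cells lam)"
    and tabs_row_decreasing: "\<And>i j. i \<in> {1..N} \<Longrightarrow> j \<in> {1..N} \<Longrightarrow> fst (t i) = fst (t j) \<Longrightarrow>
      snd (t i) < snd (t j) \<Longrightarrow> j < i"
    and tabs_column_decreasing: "\<And>i j. i \<in> {1..N} \<Longrightarrow> j \<in> {1..N} \<Longrightarrow> snd (t i) = snd (t j) \<Longrightarrow>
      fst (t i) < fst (t j) \<Longrightarrow> j < i"
  using assms by (simp_all add: tabs_def)

lemma tabs_outside: "t \<in> tabs N lam \<Longrightarrow> k \<notin> {1..N} \<Longrightarrow> t k = (0, 0)"
  by (simp add: tabs_def)

lemma tabs_in_cells: "t \<in> tabs N lam \<Longrightarrow> k \<in> {1..N} \<Longrightarrow> t k \<in> cells lam"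
  by (rule bij_betw_apply[OF tabs_bij])

lemma tabs_onto_cells:
  assumes "t \<in> tabs N lam" "c \<in> cells lam"
  obtains j where "j \<in> {1..N}" "t j = c"
  using assms tabs_bij[OF assms(1)] by (metis bij_betw_imp_surj_on imageE)

lemma cells_lower_row:
  assumes "is_partition N lam" "(r2, c) \<in> cells lam" "r1 < r2"
  shows "(r1, c) \<in> cells lam"
proof -
  from assms have "lam ! r2 \<le> lam ! r1"
    using sorted_wrt_nth_less[of "(\<ge>)" lam r1 r2] unfolding is_partition_def cells_def by auto
  with assms show ?thesis unfolding cells_def by auto
qed

text \<open>If \<open>i\<close> and \<open>i+1\<close> lie in different rows and columns, the one in the higher row lies
  strictly to the left: otherwise the row and column conditions at the cell of the lower row
  below the higher entry contradict each other.\<close>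

lemma tabs_adjacent_entries:
  assumes P: "is_partition N lam" and t: "t \<in> tabs N lam" and i: "1 \<le> i" "i < N"
    and r: "fst (t i) \<noteq> fst (t (Suc i))" and c: "snd (t i) \<noteq> snd (t (Suc i))"
  shows "fst (t i) < fst (t (Suc i)) \<and> snd (t (Suc i)) < snd (t i) \<or>
         fst (t (Suc i)) < fst (t i) \<and> snd (t i) < snd (t (Suc i))"
proof (rule ccontr)
  assume H: "\<not> ?thesis"
  obtain r1 c1 r2 c2 where 1: "t i = (r1, c1)" and 2: "t (Suc i) = (r2, c2)" by fastforce
  have iN: "i \<in> {1..N}" "Suc i \<in> {1..N}" using i by auto
  have cl1: "(r1, c1) \<in> cells lam" and cl2: "(r2, c2) \<in> cells lam"
    using tabs_in_cells[OF t iN(1)] tabs_in_cells[OF t iN(2)] 1 2 by simp_all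
  from H r c 1 2 consider "r1 < r2" "c1 < c2" | "r2 < r1" "c2 < c1" by fastforce
  then show False
  proof cases
    case 1
    then obtain j where j: "j \<in> {1..N}" "t j = (r1, c2)"
      using cells_lower_row[OF P cl2] tabs_onto_cells[OF t] by metis
    have "j < i" using tabs_row_decreasing[OF t iN(1) j(1)] \<open>t i = _\<close> j 1 by simp
    moreover have "Suc i < j" using tabs_column_decreasing[OF t j(1) iN(2)] 2 j 1 by simp
    ultimately show False by simp
  next
    case 2
    then obtain j where j: "j \<in> {1..N}" "t j = (r2, c1)"
      using cells_lower_row[OF P cl1] tabs_onto_cells[OF t] by metis
    have "j < Suc i" using tabs_row_decreasing[OF t iN(2) j(1)] \<open>t (Suc i) = _\<close> j 2 by simp
    moreover have "i < j" using tabs_column_decreasing[OF t j(1) iN(1)] \<open>t i = _\<close> j 2 by simp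
    ultimately show False by simp
  qed
qed

lemma CT_step_ge_2:
  assumes "is_partition N lam" "t \<in> tabs N lam" "1 \<le> i" "i < N"
    and "snd (t i) \<noteq> snd (t (Suc i))" "fst (t (Suc i)) < fst (t i)"
  shows "2 \<le> CT t (Suc i) - CT t i"
  using tabs_adjacent_entries[OF assms(1-4)] assms(5,6) unfolding CT_def by auto

lemma swp_less_swp:
  "swp i (Suc i) b < swp i (Suc i) a \<Longrightarrow> {a, b} \<noteq> {i, Suc i} \<Longrightarrow> b < a"
  unfolding swp_def by (auto split: if_splits simp: doubleton_eq_iff)

lemma swp_in_range: "1 \<le> i \<Longrightarrow> i < N \<Longrightarrow> k \<in> {1..N} \<Longrightarrow> swp i (Suc i) k \<in> {1..N}"
  unfolding swp_def by auto

lemma tswap_in_tabs: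
  assumes t: "t \<in> tabs N lam" and i: "1 \<le> i" "i < N"
    and r: "fst (t i) \<noteq> fst (t (Suc i))" and c: "snd (t i) \<noteq> snd (t (Suc i))"
  shows "tswap t i (Suc i) \<in> tabs N lam"
proof -
  let ?s = "swp i (Suc i)"
  have "bij_betw ?s {1..N} {1..N}"
    by (rule bij_betw_byWitness[where f' = ?s]) (use swp_in_range[OF i] in auto)
  then have bij: "bij_betw (t \<circ> ?s) {1..N} (cells lam)"
    using bij_betw_trans tabs_bij[OF t] by blast
  have swapped: "{a, b} \<noteq> {i, Suc i}"
    if "fst (t (?s a)) = fst (t (?s b)) \<or> snd (t (?s a)) = snd (t (?s b))" for a b
    using that r c by (auto simp: doubleton_eq_iff swp_def)
  have row: "b < a" if "a \<in> {1..N}" "b \<in> {1..N}" "fst (t (?s a)) = fst (t (?s b))"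
    "snd (t (?s a)) < snd (t (?s b))" for a b
  proof (rule swp_less_swp)
    show "?s b < ?s a"
      using tabs_row_decreasing[OF t swp_in_range[OF i that(1)] swp_in_range[OF i that(2)]] that by simp
    show "{a, b} \<noteq> {i, Suc i}" using swapped that(3) by blast
  qed
  have column: "b < a" if "a \<in> {1..N}" "b \<in> {1..N}" "snd (t (?s a)) = snd (t (?s b))"
    "fst (t (?s a)) < fst (t (?s b))" for a b
  proof (rule swp_less_swp)
    show "?s b < ?s a"
      using tabs_column_decreasing[OF t swp_in_range[OF i that(1)] swp_in_range[OF i that(2)]] that by simp
    show "{a, b} \<noteq> {i, Suc i}" using swapped that(3) by blast
  qed
  have outside: "(t \<circ> ?s) k = (0, 0)" if "k \<notin> {1..N}" for k
    using that tabs_outside[OF t] i by (auto simp: swp_def)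
  show ?thesis
    unfolding tswap_def tabs_def mem_Collect_eq o_apply
    using bij outside row column by (intro conjI allI ballI impI) (simp_all add: o_def)
qed

lemma tswap_tswap [simp]: "tswap (tswap t i j) i j = t"
  by (simp add: tswap_def fun_eq_iff)

lemma tswap_apply [simp]: "tswap t i (Suc i) i = t (Suc i)" "tswap t i (Suc i) (Suc i) = t i"
  by (simp_all add: tswap_def swp_def)

lemma finite_cells: "finite (cells lam)"
proof -
  have "cells lam = Sigma {..<length lam} (\<lambda>r. {..<lam ! r})"
    unfolding cells_def by auto
  then show ?thesis by simp
qed

lemma finite_tabs: "finite (tabs N lam)"
proof (rule finite_subset)
  show "tabs N lam \<subseteq> {f. \<forall>x. (x \<in> {1..N} \<longrightarrow> f x \<in> cells lam) \<and> (x \<notin> {1..N} \<longrightarrow> f x = (0, 0))}"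
    using tabs_in_cells tabs_outside by blast
  show "finite {f. \<forall>x. (x \<in> {1..N} \<longrightarrow> f x \<in> cells lam) \<and> (x \<notin> {1..N} \<longrightarrow> f x = (0, 0))}"
    by (rule finite_set_of_finite_funs) (simp_all add: finite_cells)
qed

section \<open>The quadratic relation in \<open>V\<^sub>\<lambda>\<close>\<close>

lemma hecke_img_upward:
  assumes P: "is_partition N lam" and t: "t \<in> tabs N lam" and i: "1 \<le> i" "i < N"
    and col: "snd (t i) \<noteq> snd (t (Suc i))" and up: "fst (t (Suc i)) < fst (t i)"
  obtains a b c where
    "hecke_img t i = (\<lambda>u. a * delta t u + b * delta (tswap t i (Suc i)) u)"
    "hecke_img (tswap t i (Suc i)) i = (\<lambda>u. (ss - 1 - a) * delta (tswap t i (Suc i)) u + c * delta t u)"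
    "b * c = (ss - 1) * a + ss - a\<^sup>2"
proof
  let ?m = "CT t (Suc i) - CT t i"
  show "hecke_img t i = (\<lambda>u. coef_a ?m * delta t u + coef_b ?m * delta (tswap t i (Suc i)) u)"
    using col up by (simp add: hecke_img_def Let_def)
  show "hecke_img (tswap t i (Suc i)) i = (\<lambda>u. (ss - 1 - coef_a ?m) * delta (tswap t i (Suc i)) u
      + (((ss - 1) * coef_a ?m + ss - (coef_a ?m)\<^sup>2) / coef_b ?m) * delta t u)"
    using col up by (simp add: hecke_img_def Let_def)
  show "coef_b ?m * (((ss - 1) * coef_a ?m + ss - (coef_a ?m)\<^sup>2) / coef_b ?m)
      = (ss - 1) * coef_a ?m + ss - (coef_a ?m)\<^sup>2"
    using coef_b_nonzero[OF CT_step_ge_2[OF P t i col up]] by simp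
qed

text \<open>Every basis vector spans, alone or with \<open>t\<^sup>(\<^sup>i\<^sup>,\<^sup>i\<^sup>+\<^sup>1\<^sup>)\<close>, a \<open>T\<^sub>i\<close>-invariant subspace.
  In the second case the matrix of \<open>T\<^sub>i\<close> is \<open>[[a, b], [c, s - 1 - a]]\<close>; its trace \<open>s - 1\<close> and
  determinant \<open>-s\<close> are those of the quadratic relation.\<close>

lemma hecke_img_cases:
  assumes P: "is_partition N lam" and t: "t \<in> tabs N lam" and i: "1 \<le> i" "i < N"
  obtains (eigen) e where "hecke_img t i = (\<lambda>u. e * delta t u)" "e\<^sup>2 = (ss - 1) * e + ss"
  | (pair) a b c where "tswap t i (Suc i) \<in> tabs N lam"
    "hecke_img t i = (\<lambda>u. a * delta t u + b * delta (tswap t i (Suc i)) u)"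
    "hecke_img (tswap t i (Suc i)) i = (\<lambda>u. (ss - 1 - a) * delta (tswap t i (Suc i)) u + c * delta t u)"
    "b * c = (ss - 1) * a + ss - a\<^sup>2"
proof -
  let ?t2 = "tswap t i (Suc i)"
  consider (row) "fst (t i) = fst (t (Suc i))"
    | (column) "fst (t i) \<noteq> fst (t (Suc i))" "snd (t i) = snd (t (Suc i))"
    | (up) "snd (t i) \<noteq> snd (t (Suc i))" "fst (t (Suc i)) < fst (t i)"
    | (down) "snd (t i) \<noteq> snd (t (Suc i))" "fst (t i) < fst (t (Suc i))"
    by (metis linorder_neqE_nat)
  then show thesis
  proof cases
    case row
    then show thesis
      by (intro eigen[of ss]) (simp_all add: hecke_img_def power2_eq_square algebra_simps)
  next
    case column
    then show thesis
      by (intro eigen[of "-1"]) (simp_all add: hecke_img_def)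
  next
    case up
    then have "?t2 \<in> tabs N lam" by (intro tswap_in_tabs[OF t i]) simp_all
    with hecke_img_upward[OF P t i up] pair show thesis by blast
  next
    case down
    have t2: "?t2 \<in> tabs N lam" using down by (intro tswap_in_tabs[OF t i]) simp_all
    obtain a b c where
      "hecke_img ?t2 i = (\<lambda>u. a * delta ?t2 u + b * delta t u)"
      "hecke_img t i = (\<lambda>u. (ss - 1 - a) * delta t u + c * delta ?t2 u)"
      "b * c = (ss - 1) * a + ss - a\<^sup>2"
      using hecke_img_upward[OF P t2 i] down by auto
    then show thesis
      by (intro pair[of "ss - 1 - a" c b] t2) (simp_all add: power2_eq_square algebra_simps)
  qed
qed

lemma hecke_img_outside_tabs:
  assumes "is_partition N lam" "t \<in> tabs N lam" "1 \<le> i" "i < N" "t' \<notin> tabs N lam"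
  shows "hecke_img t i t' = 0"
  using assms by (cases rule: hecke_img_cases[OF assms(1-4)]) (auto simp: delta_def)

lemma sum_delta_combination:
  assumes "finite A" "t \<in> A" "t2 \<in> A"
  shows "(\<Sum>u\<in>A. (\<alpha> * delta t u + \<beta> * delta t2 u) * g u) = \<alpha> * g t + \<beta> * (g t2 :: K)"
proof -
  have "(\<Sum>u\<in>A. (\<alpha> * delta t u + \<beta> * delta t2 u) * g u)
      = (\<Sum>u\<in>A. if u = t then \<alpha> * g u else 0) + (\<Sum>u\<in>A. if u = t2 then \<beta> * g u else 0)"
    unfolding sum.distrib[symmetric] by (rule sum.cong) (auto simp: delta_def algebra_simps)
  with assms show ?thesis by simp
qed

lemma hecke_img_quadratic:
  assumes P: "is_partition N lam" and t: "t \<in> tabs N lam" and i: "1 \<le> i" "i < N"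
  shows "(\<Sum>u\<in>tabs N lam. hecke_img t i u * hecke_img u i t')
    = (ss - 1) * hecke_img t i t' + ss * delta t t'"
proof (cases rule: hecke_img_cases[OF P t i, case_names eigen pair])
  case (eigen e)
  then show ?thesis
    using sum_delta_combination[OF finite_tabs t t, of e 0 "\<lambda>u. hecke_img u i t'"]
    by (simp add: power2_eq_square mult.assoc[symmetric] distrib_right[symmetric])
next
  case (pair a b c)
  then show ?thesis
    using sum_delta_combination[OF finite_tabs t pair(1), of a b "\<lambda>u. hecke_img u i t'"]
    by (simp add: delta_def power2_eq_square algebra_simps)
qed

section \<open>The quadratic relation in \<open>\<M>\<^sub>\<lambda>\<close>\<close>

definition tab_supported :: "nat \<Rightarrow> nat list \<Rightarrow> melem \<Rightarrow> bool" where
  "tab_supported N lam f \<longleftrightarrow> (\<forall>t. t \<notin> tabs N lam \<longrightarrow> f t = 0)"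

definition hecke_act :: "nat \<Rightarrow> nat list \<Rightarrow> nat \<Rightarrow> melem \<Rightarrow> melem" where
  "hecke_act N lam i f = (\<lambda>t'. \<Sum>t\<in>tabs N lam. mconst (hecke_img t i t') * f t)"

lemma opT_eq_hecke_act:
  "opT N lam i f t = mconst (1 - ss) * ddiff i (f t) + hecke_act N lam i (\<lambda>u. swap_var i (f u)) t"
  unfolding opT_def hecke_act_def ..

lemma additive_hecke_act:
  assumes add: "\<And>p q. F (p + q) = F p + F q" and const: "\<And>c p. F (mconst c * p) = mconst c * F p"
  shows "F (hecke_act N lam i f t) = hecke_act N lam i (\<lambda>u. F (f u)) t"
proof -
  have "F 0 = 0" using add[of 0 0] by (metis add.right_neutral add_left_cancel)
  then have "F (sum g A) = (\<Sum>x\<in>A. F (g x))" for g and A :: "tableau set"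
    by (induction A rule: infinite_finite_induct) (simp_all add: add)
  then show ?thesis by (simp add: hecke_act_def const)
qed

lemma hecke_act_add: "hecke_act N lam i (\<lambda>u. f u + g u) t = hecke_act N lam i f t + hecke_act N lam i g t"
  by (simp add: hecke_act_def distrib_left sum.distrib)

lemma hecke_act_diff: "hecke_act N lam i (\<lambda>u. f u - g u) t = hecke_act N lam i f t - hecke_act N lam i g t"
  by (simp add: hecke_act_def right_diff_distrib sum_subtractf)

lemma hecke_act_outside_tabs:
  "is_partition N lam \<Longrightarrow> 1 \<le> i \<Longrightarrow> i < N \<Longrightarrow> t' \<notin> tabs N lam \<Longrightarrow> hecke_act N lam i f t' = 0"
  by (simp add: hecke_act_def hecke_img_outside_tabs)

lemma hecke_act_quadratic:
  assumes P: "is_partition N lam" and i: "1 \<le> i" "i < N" and f: "tab_supported N lam f"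
  shows "hecke_act N lam i (hecke_act N lam i f) t'
    = mconst (ss - 1) * hecke_act N lam i f t' + mconst ss * f t'"
proof -
  let ?T = "tabs N lam"
  have "hecke_act N lam i (hecke_act N lam i f) t'
      = (\<Sum>u\<in>?T. mconst (\<Sum>t\<in>?T. hecke_img u i t * hecke_img t i t') * f u)"
    unfolding hecke_act_def sum_distrib_left mconst_sum mconst_mult sum_distrib_right
    by (subst sum.swap) (simp add: ac_simps)
  also have "\<dots> = (\<Sum>u\<in>?T. mconst ((ss - 1) * hecke_img u i t' + ss * delta u t') * f u)"
    by (simp add: hecke_img_quadratic[OF P _ i])
  also have "\<dots> = mconst (ss - 1) * hecke_act N lam i f t' + (\<Sum>u\<in>?T. mconst (ss * delta u t') * f u)"
    by (simp add: hecke_act_def mconst_add mconst_mult distrib_right sum.distrib sum_distrib_left mult.assoc)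
  also have "(\<Sum>u\<in>?T. mconst (ss * delta u t') * f u) = (\<Sum>u\<in>?T. if u = t' then mconst ss * f u else 0)"
    by (intro sum.cong) (auto simp: delta_def)
  also have "\<dots> = mconst ss * f t'"
    using f finite_tabs by (simp add: tab_supported_def)
  finally show ?thesis .
qed

lemma opT_supported:
  assumes "is_partition N lam" "1 \<le> i" "i < N" "tab_supported N lam f"
  shows "tab_supported N lam (opT N lam i f)"
  using assms by (simp add: tab_supported_def opT_eq_hecke_act hecke_act_outside_tabs)

text \<open>Writing \<open>\<T>\<^sub>i = (1 - s) \<partial> + H \<sigma>\<close> with the divided difference \<open>\<partial> = ddiff i\<close>, the variable swap
  \<open>\<sigma>\<close> and the action \<open>H\<close> of \<open>T\<^sub>i\<close> on \<open>V\<^sub>\<lambda>\<close>, the operator \<open>H\<close> commutes with \<open>\<partial>\<close> and \<open>\<sigma>\<close>, and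
  \<open>\<partial>\<^sup>2 = -\<partial>\<close>, \<open>\<partial>\<sigma> + \<sigma>\<partial> = 1 - \<sigma>\<close>, \<open>\<sigma>\<^sup>2 = 1\<close>, \<open>H\<^sup>2 = (s - 1) H + s\<close>.\<close>

lemma opT_quadratic:
  assumes P: "is_partition N lam" and i: "1 \<le> i" "i < N" and f: "tab_supported N lam f"
  shows "opT N lam i (opT N lam i f) t = mconst (ss - 1) * opT N lam i f t + mconst ss * f t"
proof -
  let ?A = "mconst (1 - ss)" and ?H = "hecke_act N lam i"
  have minus_A: "mconst (ss - 1) = - ?A"
    by (metis minus_diff_eq mconst_uminus)
  have ddiff_opT: "ddiff i (opT N lam i f t)
      = - (?A * ddiff i (f t)) + ?H (\<lambda>u. ddiff i (swap_var i (f u))) t"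
    by (simp add: opT_eq_hecke_act ddiff_add ddiff_mconst_mult ddiff_ddiff
        additive_hecke_act[of "ddiff i"])
  have swap_opT: "swap_var i (opT N lam i f u) = ?A * swap_var i (ddiff i (f u)) + ?H f u" for u
    by (simp add: opT_eq_hecke_act swap_var_add swap_var_mult additive_hecke_act[of "swap_var i"])
  have "opT N lam i (opT N lam i f) t
      = ?A * (- (?A * ddiff i (f t)) + ?H (\<lambda>u. ddiff i (swap_var i (f u))) t)
        + (?A * ?H (\<lambda>u. swap_var i (ddiff i (f u))) t + ?H (?H f) t)"
    unfolding opT_eq_hecke_act[of N lam i "opT N lam i f"] ddiff_opT swap_opT
    by (simp add: hecke_act_add additive_hecke_act[of "\<lambda>p. ?A * p"] algebra_simps)
  also have "\<dots> = - (?A * ?A * ddiff i (f t))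
      + ?A * (?H (\<lambda>u. ddiff i (swap_var i (f u))) t + ?H (\<lambda>u. swap_var i (ddiff i (f u))) t)
      + ?H (?H f) t"
    by (simp add: algebra_simps)
  also have "\<dots> = - (?A * ?A * ddiff i (f t)) + ?A * ?H (\<lambda>u. f u - swap_var i (f u)) t + ?H (?H f) t"
    unfolding hecke_act_add[symmetric] ddiff_swap_var_add_swap_var_ddiff ..
  also have "\<dots> = mconst (ss - 1) * opT N lam i f t + mconst ss * f t"
    by (simp add: hecke_act_diff hecke_act_quadratic[OF P i f] opT_eq_hecke_act minus_A algebra_simps)
  finally show ?thesis .
qed

lemma opTinv_opT:
  assumes "is_partition N lam" "1 \<le> i" "i < N" "tab_supported N lam f"
  shows "opTinv N lam i (opT N lam i f) = f"
proof
  fix t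
  have "mconst (ss - 1) + mconst (1 - ss) = 0"
    by (simp add: mconst_add[symmetric])
  then have "opT N lam i (opT N lam i f) t + mconst (1 - ss) * opT N lam i f t = mconst ss * f t"
    unfolding opT_quadratic[OF assms] by (simp add: distrib_right[symmetric])
  then have "opTinv N lam i (opT N lam i f) t = mconst (inverse ss) * (mconst ss * f t)"
    unfolding opTinv_def by simp
  then show "opTinv N lam i (opT N lam i f) t = f t"
    by (simp add: mult.assoc[symmetric] mconst_mult[symmetric])
qed

lemma act_Nil [simp]: "act f [] = f"
  and act_Cons [simp]: "act f (A # As) = act (A f) As"
  and act_append [simp]: "act f (As @ Bs) = act (act f As) Bs"
  by (simp_all add: act_def)

lemma scal_scal: "scal a (scal b f) = scal (a * b) f"
  by (simp add: scal_def fun_eq_iff mconst_mult mult.assoc)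

lemma opTinv_scal: "opTinv N lam i (scal c f) = scal c (opTinv N lam i f)"
  by (simp add: fun_eq_iff opTinv_def opT_def scal_def ddiff_mconst_mult swap_var_mult
      sum_distrib_left algebra_simps)

lemma Phi_scal: "Phi N lam (scal c f) = scal c (Phi N lam f)"
proof -
  have act_scal: "act (scal c g) (map (opTinv N lam) xs) = scal c (act g (map (opTinv N lam) xs))"
    for g xs by (induction xs arbitrary: g) (simp_all add: opTinv_scal)
  show ?thesis
    unfolding Phi_def act_scal by (simp add: opx_def scal_def mult.left_commute)
qed

lemma act_opT_supported:
  assumes "is_partition N lam" "tab_supported N lam f" "set xs \<subseteq> {1..<N}"
  shows "tab_supported N lam (act f (map (opT N lam) xs))"
  using assms(2,3) by (induction xs arbitrary: f) (simp_all add: opT_supported[OF assms(1)])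

lemma act_opTinv_act_opT:
  assumes "is_partition N lam" "tab_supported N lam f" "set xs \<subseteq> {1..<N}"
  shows "act (act f (map (opT N lam) (rev xs))) (map (opTinv N lam) xs) = f"
  using assms(3)
proof (induction xs)
  case (Cons x xs)
  have "tab_supported N lam (act f (map (opT N lam) (rev xs)))"
    using act_opT_supported[OF assms(1,2)] Cons.prems by simp
  with Cons show ?case by (simp add: opTinv_opT[OF assms(1)])
qed simp

text \<open>For \<open>N \<ge> 2\<close> the word \<open>T\<^sub>1 \<cdots> T\<^sub>N\<^sub>-\<^sub>1\<close> in \<open>\<^bold>w\<close> is nonempty, and its last letter already
  kills the components outside the tableaux.\<close>

lemma opw_supported:
  assumes P: "is_partition N lam" and N: "2 \<le> N"
  shows "tab_supported N lam (opw N lam f)"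
  unfolding tab_supported_def
proof (intro allI impI)
  fix t' assume t': "t' \<notin> tabs N lam"
  have "[1..<N] = [1..<N - 1] @ [N - 1]"
    using N upt_Suc_append[of 1 "N - 1"] by simp
  then have "vec_w N lam u t' = vec_T N lam (N - 1) (foldl (\<lambda>v i. vec_T N lam i v) u [1..<N - 1]) t'" for u
    unfolding vec_w_def by simp
  also have "\<dots> u = 0" for u
    unfolding vec_T_def using hecke_img_outside_tabs[OF P _ _ _ t', of _ "N - 1"] N by simp
  finally show "opw N lam f t' = 0" unfolding opw_def by simp
qed

lemma Phi_Xi_first:
  assumes "is_partition N lam" "2 \<le> N"
  shows "Phi N lam (Xi N lam 1 f) = scal (ss powi (1 - int N)) (Phi' N lam f)"
proof -
  have "act (act (opw N lam f) (map (opT N lam) (rev [1..<N]))) (map (opTinv N lam) [1..<N])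
      = opw N lam f"
    by (rule act_opTinv_act_opT[OF assms(1) opw_supported[OF assms]]) auto
  then show ?thesis
    using Phi_scal[of N lam "ss powi (1 - int N)"]
    by (simp add: Xi_def Phi_def Phi'_def)
qed

theorem proposition4p1:
  fixes N :: nat and lam :: "nat list"
  assumes "2 \<le> N" and "is_partition N lam"
  shows "(\<forall>f\<in>Mcarrier N lam. Phi' N lam f = scal (ss ^ (N - 1)) (Phi N lam (Xi N lam 1 f)))
    \<and> (\<forall>(v :: nat \<Rightarrow> nat) T f. T \<in> tabs N lam \<longrightarrow> f \<in> Mcarrier N lam \<longrightarrow>
         (\<forall>i\<in>{1..N}. Xi N lam i f = scal (qq ^ v i * ss powi CT T (rv N v i)) f) \<longrightarrow>
         Phi' N lam f = scal (ss powi (int N - 1 + CT T (rv N v 1)) * qq ^ v 1) (Phi N lam f))"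
proof -
  have ss_N: "ss ^ (N - 1) = ss powi (int N - 1)"
    using assms(1) by (metis of_nat_1 of_nat_diff power_int_of_nat le_trans one_le_numeral)
  have first: "Phi' N lam f = scal (ss ^ (N - 1)) (Phi N lam (Xi N lam 1 f))" for f
  proof -
    have "ss ^ (N - 1) * ss powi (1 - int N) = 1"
      unfolding ss_N power_int_add[OF disjI1[OF ss_nonzero], symmetric] by simp
    then show ?thesis
      unfolding Phi_Xi_first[OF assms(2,1)] scal_scal by (simp add: scal_def)
  qed
  moreover have "Phi' N lam f = scal (ss powi (int N - 1 + CT T (rv N v 1)) * qq ^ v 1) (Phi N lam f)"
    if "Xi N lam 1 f = scal (qq ^ v 1 * ss powi CT T (rv N v 1)) f" for v :: "nat \<Rightarrow> nat" and T f
    unfolding first[of f] that Phi_scal scal_scal ss_N power_int_add[OF disjI1[OF ss_nonzero]]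
    by (simp only: ac_simps)
  ultimately show ?thesis
    using assms(1) by auto
qed

end
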